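(* Let $A$ and $B$ be two $n\times n\times n$ alternating sign hypermatrices. Then $L(A)=L(B)$ if and only if $A-B$ can be expressed as a sum of pairs of T-blocks, where the two T-blocks in each pair have opposite depth and occupy the same vertical lines.
   Context: An $n\times n\times n$ hypermatrix $A=[a_{ijk}]$ has row lines $A_{*jk}=[a_{ijk}: i=1,\dots,n]$, column lines $A_{i*k}=[a_{ijk}: j=1,\dots,n]$ and vertical lines $A_{ij*}=[a_{ijk}: k=1,\dots,n]$. An alternating sign hypermatrix (ASHM) is an $n\times n\times n$ hypermatrix with entries in $\{0,1,-1\}$ such that in every row line, column line and vertical line the non-zero entries alternate in sign, starting and ending with $+1$. The $k$-th plane of $A$ is $P_k(A)=[a_{ijk}]_{i,j=1}^n$, and $L(A)=\sum_{k=1}^n k\,P_k(A)$. For indices $i_1<i_2$, $j_1<j_2$, $k_1<k_2$, the hypermatrix $T_{i_1,j_1,k_1:\,i_2,j_2,k_2}=[t_{ijk}]$ has $t_{ijk}=1$ for $(i,j,k)\in\{(i_1,j_1,k_1),(i_2,j_2,k_1),(i_2,j_1,k_2),(i_1,j_2,k_2)\}$, $t_{ijk}=-1$ for $(i,j,k)\in\{(i_2,j_1,k_1),(i_1,j_2,k_1),(i_1,j_1,k_2),(i_2,j_2,k_2)\}$, and $0$ otherwise. A T-block is a hypermatrix $T=\pm T_{i_1,j_1,k_1:\,i_2,j_2,k_2}$; its depth is $d(T)=k_2-k_1$ if $T=T_{i_1,j_1,k_1:\,i_2,j_2,k_2}$ and $d(T)=k_1-k_2$ if $T=-T_{i_1,j_1,k_1:\,i_2,j_2,k_2}$.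 Two T-blocks $T_1,T_2$ have opposite depth if $d(T_1)=-d(T_2)$. A T-block $\pm T_{i_1,j_1,k_1:\,i_2,j_2,k_2}$ occupies the vertical lines at positions $(i_1,j_1),(i_1,j_2),(i_2,j_1),(i_2,j_2)$. *)

theory Defs
  imports Main
begin

text \<open>An n x n x n hypermatrix is represented as a function nat => nat => nat => int,
  with indices ranging over {1..n}; entries outside {1..n}^3 are required to be 0.\<close>

type_synonym hypermatrix = "nat \<Rightarrow> nat \<Rightarrow> nat \<Rightarrow> int"

definition alt_sign_line :: "nat \<Rightarrow> (nat \<Rightarrow> int) \<Rightarrow> bool" where
  "alt_sign_line n v \<longleftrightarrow>
     (let xs = filter (\<lambda>x. x \<noteq> 0) (map v [1..<n+1]) in
        xs \<noteq> [] \<and> hd xs = 1 \<and> last xs = 1 \<and>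
        (\<forall>m. Suc m < length xs \<longrightarrow> xs ! Suc m = - (xs ! m)))"

definition ashm :: "nat \<Rightarrow> hypermatrix \<Rightarrow> bool" where
  "ashm n A \<longleftrightarrow>
     (\<forall>i j k. \<not> (i \<in> {1..n} \<and> j \<in> {1..n} \<and> k \<in> {1..n}) \<longrightarrow> A i j k = 0) \<and>
     (\<forall>i j k. A i j k \<in> {0, 1, -1}) \<and>
     (\<forall>j\<in>{1..n}. \<forall>k\<in>{1..n}. alt_sign_line n (\<lambda>i. A i j k)) \<and>
     (\<forall>i\<in>{1..n}. \<forall>k\<in>{1..n}. alt_sign_line n (\<lambda>j. A i j k)) \<and>
     (\<forall>i\<in>{1..n}. \<forall>j\<in>{1..n}. alt_sign_line n (\<lambda>k. A i j k))"

definition Lmat :: "nat \<Rightarrow> hypermatrix \<Rightarrow> nat \<Rightarrow> nat \<Rightarrow> int" where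
  "Lmat n A i j = (\<Sum>k = 1..n. int k * A i j k)"

definition Thm :: "nat \<Rightarrow> nat \<Rightarrow> nat \<Rightarrow> nat \<Rightarrow> nat \<Rightarrow> nat \<Rightarrow> hypermatrix" where
  "Thm i1 j1 k1 i2 j2 k2 = (\<lambda>i j k.
     if (i, j, k) \<in> {(i1, j1, k1), (i2, j2, k1), (i2, j1, k2), (i1, j2, k2)} then 1
     else if (i, j, k) \<in> {(i2, j1, k1), (i1, j2, k1), (i1, j1, k2), (i2, j2, k2)} then -1
     else 0)"

text \<open>A T-block is encoded as (s, i1, j1, k1, i2, j2, k2), standing for s * T_{i1,j1,k1:i2,j2,k2}.\<close>
type_synonym tblock = "int \<times> nat \<times> nat \<times> nat \<times> nat \<times> nat \<times> nat"

fun valid_tblock :: "nat \<Rightarrow> tblock \<Rightarrow> bool" where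
  "valid_tblock n (s, i1, j1, k1, i2, j2, k2) \<longleftrightarrow>
     s \<in> {1, -1} \<and> 1 \<le> i1 \<and> i1 < i2 \<and> i2 \<le> n \<and> 1 \<le> j1 \<and> j1 < j2 \<and> j2 \<le> n \<and>
     1 \<le> k1 \<and> k1 < k2 \<and> k2 \<le> n"

fun tblock_hm :: "tblock \<Rightarrow> hypermatrix" where
  "tblock_hm (s, i1, j1, k1, i2, j2, k2) = (\<lambda>i j k. s * Thm i1 j1 k1 i2 j2 k2 i j k)"

fun depth :: "tblock \<Rightarrow> int" where
  "depth (s, i1, j1, k1, i2, j2, k2) = (if s = 1 then int k2 - int k1 else int k1 - int k2)"

fun vlines :: "tblock \<Rightarrow> (nat \<times> nat) set" where
  "vlines (s, i1, j1, k1, i2, j2, k2) = {(i1, j1), (i1, j2), (i2, j1), (i2, j2)}"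

end

theory Submission
  imports Defs
begin

(* Write D = A - B. Then L(A) = L(B) says that every vertical line of D has zero first moment
   sum_k k D_ijk, and all line sums of D vanish because every line of an ASHM sums to 1.
   A pair of opposite-depth T-blocks on the same vertical lines has zero first moment on each
   of them, which gives one direction. Conversely, the vanishing row and column sums give
   D = sum_{i,j >= 2} (e_1 - e_i) \<otimes> (e_1 - e_j) \<otimes> D_ij*; a vector with zero sum and zero first
   moment is an integer combination of second differences e_a - 2 e_(a+1) + e_(a+2); and
   (e_1 - e_i) \<otimes> (e_1 - e_j) \<otimes> (e_a - 2 e_(a+1) + e_(a+2)) = T_(1,1,a:i,j,a+1) - T_(1,1,a+1:i,j,a+2)
   is such a pair of T-blocks. *)

definition ediff :: "nat \<Rightarrow> nat \<Rightarrow> nat \<Rightarrow> int" where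
  "ediff a b x = (if x = a then 1 else 0) - (if x = b then 1 else 0)"

lemma sum_ediff: "a \<in> {1..N} \<Longrightarrow> b \<in> {1..N} \<Longrightarrow> (\<Sum>x=1..N. ediff a b x) = 0"
  by (simp add: ediff_def sum_subtractf)

lemma moment_ediff:
  assumes "a \<in> {1..N}" "b \<in> {1..N}"
  shows "(\<Sum>x=1..N. int x * ediff a b x) = int a - int b"
proof -
  have "int x * ediff a b x = (if x = a then int a else 0) - (if x = b then int b else 0)" for x
    by (simp add: ediff_def right_diff_distrib)
  then show ?thesis
    using assms by (simp add: sum_subtractf)
qed

lemma Thm_eq_ediff_prod:
  "i1 \<noteq> i2 \<Longrightarrow> j1 \<noteq> j2 \<Longrightarrow> k1 \<noteq> k2 \<Longrightarrow>
   Thm i1 j1 k1 i2 j2 k2 i j k = ediff i1 i2 i * ediff j1 j2 j * ediff k1 k2 k"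
  by (auto simp: Thm_def ediff_def)

lemma tblock_moment:
  assumes "valid_tblock n (s, i1, j1, k1, i2, j2, k2)"
  shows "(\<Sum>k=1..n. int k * tblock_hm (s, i1, j1, k1, i2, j2, k2) i j k)
         = - depth (s, i1, j1, k1, i2, j2, k2) * ediff i1 i2 i * ediff j1 j2 j"
proof -
  have "(\<Sum>k=1..n. int k * tblock_hm (s, i1, j1, k1, i2, j2, k2) i j k)
       = s * ediff i1 i2 i * ediff j1 j2 j * (\<Sum>k=1..n. int k * ediff k1 k2 k)"
    using assms by (simp add: Thm_eq_ediff_prod sum_distrib_left algebra_simps)
  also have "\<dots> = s * ediff i1 i2 i * ediff j1 j2 j * (int k1 - int k2)"
    using assms moment_ediff[of k1 n k2] by simp
  finally show ?thesis
    using assms by (auto simp: algebra_simps)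
qed

lemma vlines_eq_same_corners:
  assumes "valid_tblock n (s, i1, j1, k1, i2, j2, k2)"
    and "valid_tblock n (s', i1', j1', k1', i2', j2', k2')"
    and "vlines (s, i1, j1, k1, i2, j2, k2) = vlines (s', i1', j1', k1', i2', j2', k2')"
  shows "i1 = i1' \<and> i2 = i2' \<and> j1 = j1' \<and> j2 = j2'"
proof -
  have "{i1, i2} = {i1', i2'}" "{j1, j2} = {j1', j2'}"
    using arg_cong[OF assms(3), of "image fst"] arg_cong[OF assms(3), of "image snd"]
    by (simp_all add: insert_commute)
  then show ?thesis
    using assms(1,2) by (auto simp: doubleton_eq_iff)
qed

definition opposite_pair :: "nat \<Rightarrow> tblock \<Rightarrow> tblock \<Rightarrow> bool" where
  "opposite_pair n T1 T2 \<longleftrightarrow>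
     valid_tblock n T1 \<and> valid_tblock n T2 \<and> depth T1 = - depth T2 \<and> vlines T1 = vlines T2"

definition pairs_hm :: "(tblock \<times> tblock) list \<Rightarrow> hypermatrix" where
  "pairs_hm ps = (\<lambda>i j k. \<Sum>(T1, T2) \<leftarrow> ps. tblock_hm T1 i j k + tblock_hm T2 i j k)"

definition tpair_decomposable :: "nat \<Rightarrow> hypermatrix \<Rightarrow> bool" where
  "tpair_decomposable n D \<longleftrightarrow>
     (\<exists>ps. (\<forall>(T1, T2) \<in> set ps. opposite_pair n T1 T2) \<and> D = pairs_hm ps)"

lemma opposite_pair_moment:
  assumes "opposite_pair n T1 T2"
  shows "(\<Sum>k=1..n. int k * (tblock_hm T1 i j k + tblock_hm T2 i j k)) = 0"
proof -
  obtain s i1 j1 k1 i2 j2 k2 where T1: "T1 = (s, i1, j1, k1, i2, j2, k2)"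
    by (cases T1)
  obtain s' i1' j1' k1' i2' j2' k2' where T2: "T2 = (s', i1', j1', k1', i2', j2', k2')"
    by (cases T2)
  have valid: "valid_tblock n T1" "valid_tblock n T2"
    using assms by (simp_all add: opposite_pair_def)
  have "i1 = i1' \<and> i2 = i2' \<and> j1 = j1' \<and> j2 = j2'"
    using vlines_eq_same_corners assms unfolding T1 T2 opposite_pair_def by blast
  then have "(\<Sum>k=1..n. int k * (tblock_hm T1 i j k + tblock_hm T2 i j k))
      = - (depth T1 + depth T2) * ediff i1 i2 i * ediff j1 j2 j"
    using tblock_moment[OF valid(1)[unfolded T1]] tblock_moment[OF valid(2)[unfolded T2]]
    by (simp add: T1 T2 distrib_left sum.distrib algebra_simps)
  also have "\<dots> = 0"
    using assms by (simp add: opposite_pair_def)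
  finally show ?thesis .
qed

lemma moment_pairs_hm:
  assumes "\<forall>(T1, T2) \<in> set ps. opposite_pair n T1 T2"
  shows "(\<Sum>k=1..n. int k * pairs_hm ps i j k) = 0"
  using assms
proof (induction ps)
  case Nil
  then show ?case by (simp add: pairs_hm_def)
next
  case (Cons p ps)
  obtain T1 T2 where p: "p = (T1, T2)"
    by (cases p)
  have "(\<Sum>k=1..n. int k * pairs_hm (p # ps) i j k)
      = (\<Sum>k=1..n. int k * (tblock_hm T1 i j k + tblock_hm T2 i j k))
        + (\<Sum>k=1..n. int k * pairs_hm ps i j k)"
    by (simp add: pairs_hm_def p distrib_left sum.distrib)
  then show ?case
    using Cons opposite_pair_moment p by simp
qed

lemma moment_tpair_decomposable:
  "tpair_decomposable n D \<Longrightarrow> (\<Sum>k=1..n. int k * D i j k) = 0"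
  unfolding tpair_decomposable_def using moment_pairs_hm by blast

lemma tpair_decomposable_zero: "tpair_decomposable n (\<lambda>i j k. 0)"
  unfolding tpair_decomposable_def by (rule exI[of _ "[]"]) (simp add: pairs_hm_def)

lemma tpair_decomposable_add:
  assumes "tpair_decomposable n X" "tpair_decomposable n Y"
  shows "tpair_decomposable n (\<lambda>i j k. X i j k + Y i j k)"
proof -
  obtain ps qs where
    "\<forall>(T1, T2) \<in> set ps. opposite_pair n T1 T2" "X = pairs_hm ps"
    "\<forall>(T1, T2) \<in> set qs. opposite_pair n T1 T2" "Y = pairs_hm qs"
    using assms unfolding tpair_decomposable_def by blast
  then show ?thesis
    unfolding tpair_decomposable_def by (intro exI[of _ "ps @ qs"]) (auto simp: pairs_hm_def)
qed

fun neg_tblock :: "tblock \<Rightarrow> tblock" where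
  "neg_tblock (s, r) = (- s, r)"

lemma opposite_pair_neg:
  "opposite_pair n T1 T2 \<Longrightarrow> opposite_pair n (neg_tblock T1) (neg_tblock T2)"
  by (cases T1; cases T2) (auto simp: opposite_pair_def)

lemma pairs_hm_neg:
  "pairs_hm (map (map_prod neg_tblock neg_tblock) ps) i j k = - pairs_hm ps i j k"
proof -
  have "tblock_hm (neg_tblock T) i j k = - tblock_hm T i j k" for T
    by (cases T) simp
  then show ?thesis
    by (induction ps) (auto simp: pairs_hm_def)
qed

lemma tpair_decomposable_uminus:
  assumes "tpair_decomposable n X"
  shows "tpair_decomposable n (\<lambda>i j k. - X i j k)"
proof -
  obtain ps where ps: "\<forall>(T1, T2) \<in> set ps. opposite_pair n T1 T2" "X = pairs_hm ps"
    using assms unfolding tpair_decomposable_def by blast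
  let ?qs = "map (map_prod neg_tblock neg_tblock) ps"
  have "\<forall>(T1, T2) \<in> set ?qs. opposite_pair n T1 T2"
    using ps(1) opposite_pair_neg by fastforce
  moreover have "(\<lambda>i j k. - X i j k) = pairs_hm ?qs"
    by (simp add: ps(2) pairs_hm_neg fun_eq_iff)
  ultimately show ?thesis
    unfolding tpair_decomposable_def by blast
qed

lemma tpair_decomposable_scale:
  assumes "tpair_decomposable n X"
  shows "tpair_decomposable n (\<lambda>i j k. z * X i j k)"
proof (induction z rule: int_induct[where k = 0])
  case base
  then show ?case using tpair_decomposable_zero by simp
next
  case (step1 z)
  then show ?case
    using tpair_decomposable_add[OF step1(2) assms] by (simp add: algebra_simps)
next
  case (step2 z)
  then show ?case
    using tpair_decomposable_add[OF step2(2) tpair_decomposable_uminus[OF assms]]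
    by (simp add: algebra_simps)
qed

lemma tpair_decomposable_sum:
  assumes "finite S" "\<And>x. x \<in> S \<Longrightarrow> tpair_decomposable n (F x)"
  shows "tpair_decomposable n (\<lambda>i j k. \<Sum>x\<in>S. F x i j k)"
  using assms
proof (induction S rule: finite_induct)
  case empty
  then show ?case using tpair_decomposable_zero by simp
next
  case (insert x S)
  then show ?case
    using tpair_decomposable_add[of n "F x" "\<lambda>i j k. \<Sum>x\<in>S. F x i j k"] by simp
qed

definition second_diff :: "nat \<Rightarrow> nat \<Rightarrow> int" where
  "second_diff a k = ediff a (Suc a) k - ediff (Suc a) (Suc (Suc a)) k"

inductive second_diff_span :: "nat \<Rightarrow> (nat \<Rightarrow> int) \<Rightarrow> bool" for N where
  second_diff_span_zero: "second_diff_span N (\<lambda>k. 0)"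
| second_diff_span_step: "second_diff_span N v \<Longrightarrow> 1 \<le> a \<Longrightarrow> a + 2 \<le> N \<Longrightarrow>
    second_diff_span N (\<lambda>k. v k + z * second_diff a k)"

lemma sum_second_diff: "1 \<le> a \<Longrightarrow> a + 2 \<le> N \<Longrightarrow> (\<Sum>k=1..N. second_diff a k) = 0"
  using sum_ediff[of a N "Suc a"] sum_ediff[of "Suc a" N "Suc (Suc a)"]
  by (simp add: second_diff_def sum_subtractf)

lemma moment_second_diff: "1 \<le> a \<Longrightarrow> a + 2 \<le> N \<Longrightarrow> (\<Sum>k=1..N. int k * second_diff a k) = 0"
  using moment_ediff[of a N "Suc a"] moment_ediff[of "Suc a" N "Suc (Suc a)"]
  by (simp add: second_diff_def right_diff_distrib sum_subtractf)

lemma top_entry_eq_0_if_moments_zero: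
  assumes "m \<le> 1" "Suc m \<le> N" "\<forall>k. v k \<noteq> 0 \<longrightarrow> k \<in> {1..Suc m}"
    and "(\<Sum>k=1..N. v k) = 0" "(\<Sum>k=1..N. int k * v k) = (0::int)"
  shows "v (Suc m) = 0"
proof -
  have "(\<Sum>k=1..N. (int k - int m) * v k) = (\<Sum>k=1..Suc m. (int k - int m) * v k)"
    using assms(2,3) by (intro sum.mono_neutral_right) auto
  also have "\<dots> = (\<Sum>k=1..m. (int k - int m) * v k) + v (Suc m)"
    by (simp add: sum.cl_ivl_Suc)
  also have "\<dots> = v (Suc m)"
    using assms(1) by (simp add: sum.neutral)
  finally show ?thesis
    using assms(4,5) by (simp add: left_diff_distrib sum_subtractf sum_distrib_left[symmetric])
qed

(* Induction on the support bound m: the top entry v (m + 1) is cancelled by a multiple of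
   second_diff (m - 1) when m >= 2, and vanishes already when m <= 1. *)
lemma second_diff_span_if_support_le:
  assumes "m \<le> N" "\<forall>k. v k \<noteq> 0 \<longrightarrow> k \<in> {1..m}"
    and "(\<Sum>k=1..N. v k) = 0" "(\<Sum>k=1..N. int k * v k) = 0"
  shows "second_diff_span N v"
  using assms
proof (induction m arbitrary: v)
  case 0
  then have "v = (\<lambda>k. 0)"
    by auto
  then show ?case
    by (simp add: second_diff_span_zero)
next
  case (Suc m)
  show ?case
  proof (cases "m \<le> 1")
    case True
    then have "v (Suc m) = 0"
      using Suc.prems top_entry_eq_0_if_moments_zero by blast
    then have "\<forall>k. v k \<noteq> 0 \<longrightarrow> k \<in> {1..m}"
      using Suc.prems(2) le_Suc_eq by auto
    then show ?thesis
      using Suc.IH Suc.prems(1,3,4) by simp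
  next
    case False
    define a where "a = m - 1"
    have a: "1 \<le> a" "a + 2 \<le> N" "Suc (Suc a) = Suc m"
      using False Suc.prems(1) by (auto simp: a_def)
    define z where "z = v (Suc m)"
    define w where "w = (\<lambda>k. v k - z * second_diff a k)"
    have "second_diff a (Suc m) = 1"
      using a by (auto simp: second_diff_def ediff_def)
    then have "\<forall>k. w k \<noteq> 0 \<longrightarrow> k \<in> {1..m}"
      using Suc.prems(2) a
      by (auto simp: w_def z_def second_diff_def ediff_def le_Suc_eq split: if_splits)
    moreover have "(\<Sum>k=1..N. w k) = 0" "(\<Sum>k=1..N. int k * w k) = 0"
      using Suc.prems(3,4) sum_second_diff[OF a(1,2)] moment_second_diff[OF a(1,2)]
      by (simp_all add: w_def right_diff_distrib sum_subtractf sum_distrib_left[symmetric]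
          algebra_simps)
    ultimately have "second_diff_span N w"
      using Suc.IH Suc.prems(1) by simp
    then have "second_diff_span N (\<lambda>k. w k + z * second_diff a k)"
      using second_diff_span_step a by blast
    then show ?thesis
      by (simp add: w_def)
  qed
qed

lemma second_diff_span_if_moments_zero:
  assumes "\<forall>k. v k \<noteq> 0 \<longrightarrow> k \<in> {1..N}"
    and "(\<Sum>k=1..N. v k) = 0" "(\<Sum>k=1..N. int k * v k) = 0"
  shows "second_diff_span N v"
  using second_diff_span_if_support_le[OF order.refl assms] .

definition rect_hm :: "nat \<Rightarrow> nat \<Rightarrow> (nat \<Rightarrow> int) \<Rightarrow> hypermatrix" where
  "rect_hm i j v = (\<lambda>i' j' k. ediff 1 i i' * ediff 1 j j' * v k)"

lemma tpair_decomposable_rect_second_diff: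
  assumes "2 \<le> i" "i \<le> n" "2 \<le> j" "j \<le> n" "1 \<le> a" "a + 2 \<le> n"
  shows "tpair_decomposable n (rect_hm i j (second_diff a))"
proof -
  let ?T1 = "(1, 1, 1, a, i, j, Suc a) :: tblock"
  let ?T2 = "(-1, 1, 1, Suc a, i, j, Suc (Suc a)) :: tblock"
  have "opposite_pair n ?T1 ?T2"
    using assms by (simp add: opposite_pair_def)
  moreover have "rect_hm i j (second_diff a) = pairs_hm [(?T1, ?T2)]"
    using assms
    by (auto simp: rect_hm_def pairs_hm_def second_diff_def Thm_eq_ediff_prod algebra_simps)
  ultimately show ?thesis
    unfolding tpair_decomposable_def by (intro exI[of _ "[(?T1, ?T2)]"]) simp
qed

lemma tpair_decomposable_rect:
  assumes "second_diff_span n v" "2 \<le> i" "i \<le> n" "2 \<le> j" "j \<le> n"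
  shows "tpair_decomposable n (rect_hm i j v)"
  using assms(1)
proof (induction rule: second_diff_span.induct)
  case second_diff_span_zero
  then show ?case
    using tpair_decomposable_zero by (simp add: rect_hm_def)
next
  case (second_diff_span_step v a z)
  have "tpair_decomposable n (rect_hm i j (second_diff a))"
    using assms second_diff_span_step.hyps by (intro tpair_decomposable_rect_second_diff) auto
  then have "tpair_decomposable n
      (\<lambda>i' j' k. rect_hm i j v i' j' k + z * rect_hm i j (second_diff a) i' j' k)"
    using tpair_decomposable_add[OF second_diff_span_step.IH tpair_decomposable_scale] by blast
  then show ?case
    by (simp add: rect_hm_def algebra_simps)
qed

lemma sum_ediff_1_weighted:
  assumes "\<forall>x. x \<notin> {1..n} \<longrightarrow> w x = 0" "(\<Sum>x=1..n. w x) = 0"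
  shows "(\<Sum>x=2..n. ediff 1 x y * w x) = - w y"
proof -
  have "(\<Sum>x=2..n. ediff 1 x y * w x) = (\<Sum>x=1..n. ediff 1 x y * w x)"
    by (rule sum.mono_neutral_left) (auto simp: ediff_def)
  also have "\<dots> = (\<Sum>x=1..n. (if y = 1 then w x else 0) - (if x = y then w x else 0))"
    by (intro sum.cong) (auto simp: ediff_def)
  also have "\<dots> = (if y = 1 then \<Sum>x=1..n. w x else 0) - (if y \<in> {1..n} then w y else 0)"
    by (simp add: sum_subtractf)
  also have "\<dots> = - w y"
    using assms by auto
  finally show ?thesis .
qed

lemma rect_hm_expansion:
  assumes support: "\<And>i j k. \<not> (i \<in> {1..n} \<and> j \<in> {1..n} \<and> k \<in> {1..n}) \<Longrightarrow> D i j k = 0"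
    and rows: "\<And>j k. (\<Sum>i=1..n. D i j k) = 0"
    and columns: "\<And>i k. (\<Sum>j=1..n. D i j k) = 0"
  shows "D = (\<lambda>i' j' k. \<Sum>i=2..n. \<Sum>j=2..n. rect_hm i j (D i j) i' j' k)"
proof (intro ext)
  fix i' j' k
  have row_support: "\<forall>x. x \<notin> {1..n} \<longrightarrow> D x j k = 0" for j k
    using support by blast
  have column_support: "\<forall>x. x \<notin> {1..n} \<longrightarrow> D i x k = 0" for i k
    using support by blast
  have "(\<Sum>i=2..n. \<Sum>j=2..n. rect_hm i j (D i j) i' j' k)
      = (\<Sum>i=2..n. ediff 1 i i' * (\<Sum>j=2..n. ediff 1 j j' * D i j k))"
    by (simp add: rect_hm_def sum_distrib_left mult.assoc mult.left_commute)
  also have "\<dots> = - (\<Sum>i=2..n. ediff 1 i i' * D i j' k)"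
    using sum_ediff_1_weighted[OF column_support columns] by (simp add: sum_negf)
  also have "\<dots> = D i' j' k"
    using sum_ediff_1_weighted[OF row_support rows] by simp
  finally show "D i' j' k = (\<Sum>i=2..n. \<Sum>j=2..n. rect_hm i j (D i j) i' j' k)" ..
qed

lemma tpair_decomposable_iff_moments_zero:
  assumes support: "\<And>i j k. \<not> (i \<in> {1..n} \<and> j \<in> {1..n} \<and> k \<in> {1..n}) \<Longrightarrow> D i j k = 0"
    and rows: "\<And>j k. (\<Sum>i=1..n. D i j k) = 0"
    and columns: "\<And>i k. (\<Sum>j=1..n. D i j k) = 0"
    and verticals: "\<And>i j. (\<Sum>k=1..n. D i j k) = 0"
  shows "tpair_decomposable n D \<longleftrightarrow> (\<forall>i j. (\<Sum>k=1..n. int k * D i j k) = 0)"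
proof
  assume "tpair_decomposable n D"
  then show "\<forall>i j. (\<Sum>k=1..n. int k * D i j k) = 0"
    using moment_tpair_decomposable by blast
next
  assume moments: "\<forall>i j. (\<Sum>k=1..n. int k * D i j k) = 0"
  have "second_diff_span n (D i j)" for i j
    using support verticals moments by (intro second_diff_span_if_moments_zero) auto
  then have "tpair_decomposable n (rect_hm i j (D i j))" if "i \<in> {2..n}" "j \<in> {2..n}" for i j
    using tpair_decomposable_rect that by simp
  then have "tpair_decomposable n (\<lambda>i' j' k. \<Sum>i=2..n. \<Sum>j=2..n. rect_hm i j (D i j) i' j' k)"
    by (intro tpair_decomposable_sum) auto
  then show "tpair_decomposable n D"
    using rect_hm_expansion[OF support rows columns] by simp
qed

lemma sum_list_alternating:
  "xs \<noteq> [] \<Longrightarrow> hd xs = 1 \<Longrightarrow> last xs = 1 \<Longrightarrow>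
   (\<forall>m. Suc m < length xs \<longrightarrow> xs ! Suc m = - (xs ! m)) \<Longrightarrow> sum_list xs = (1::int)"
proof (induction xs rule: induct_list012)
  case (3 x y zs)
  have "x = 1" "y = -1"
    using "3.prems"(2) "3.prems"(4)[rule_format, of 0] by auto
  then have "zs \<noteq> []"
    using "3.prems"(3) by auto
  have "hd zs = 1"
    using "3.prems"(4)[rule_format, of 1] \<open>y = -1\<close> \<open>zs \<noteq> []\<close> by (cases zs) auto
  moreover have "\<forall>m. Suc m < length zs \<longrightarrow> zs ! Suc m = - (zs ! m)"
    using "3.prems"(4)[rule_format, of "Suc (Suc _)"] by auto
  ultimately have "sum_list zs = 1"
    using "3.IH"(1) \<open>zs \<noteq> []\<close> "3.prems"(3) by simp
  then show ?case
    using \<open>x = 1\<close> \<open>y = -1\<close> by simp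
qed auto

lemma sum_alt_sign_line:
  assumes "alt_sign_line n v"
  shows "(\<Sum>k=1..n. v k) = 1"
proof -
  let ?xs = "map v [1..<n+1]"
  have "sum_list (filter (\<lambda>x. x \<noteq> 0) ?xs) = 1"
    using assms unfolding alt_sign_line_def Let_def by (intro sum_list_alternating) auto
  moreover have "sum_list (filter (\<lambda>x. x \<noteq> 0) ?xs) = sum_list ?xs"
    using sum_list_map_filter[of ?xs "\<lambda>x. x \<noteq> 0" "\<lambda>x. x"] by simp
  moreover have "sum_list ?xs = (\<Sum>k=1..n. v k)"
    by (simp only: sum_set_upt_conv_sum_list_nat[symmetric] set_upt atLeastLessThanSuc_atLeastAtMost
        Suc_eq_plus1[symmetric])
  ultimately show ?thesis
    by simp
qed

lemma ashm_vertical_sum: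
  assumes "ashm n A"
  shows "(\<Sum>k=1..n. A i j k) = (if i \<in> {1..n} \<and> j \<in> {1..n} then 1 else 0)"
  using assms sum_alt_sign_line unfolding ashm_def by auto

lemma ashm_vertical_sums_eq:
  assumes "ashm n A" "ashm n B"
  shows "(\<Sum>k=1..n. A i j k - B i j k) = 0"
  using ashm_vertical_sum[OF assms(1)] ashm_vertical_sum[OF assms(2)] by (simp add: sum_subtractf)

lemma ashm_rotate: "ashm n A \<Longrightarrow> ashm n (\<lambda>i j k. A j k i)"
  unfolding ashm_def by blast

theorem theorem2p8:
  fixes n :: nat and A B :: hypermatrix
  assumes "ashm n A" and "ashm n B"
  shows "Lmat n A = Lmat n B \<longleftrightarrow>
    (\<exists>ps :: (tblock \<times> tblock) list.
       (\<forall>(T1, T2) \<in> set ps. valid_tblock n T1 \<and> valid_tblock n T2 \<and>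
                            depth T1 = - depth T2 \<and> vlines T1 = vlines T2) \<and>
       (\<lambda>i j k. A i j k - B i j k) =
         (\<lambda>i j k. \<Sum>(T1, T2) \<leftarrow> ps. tblock_hm T1 i j k + tblock_hm T2 i j k))"
proof -
  let ?D = "\<lambda>i j k. A i j k - B i j k"
  note rotated = ashm_rotate[OF assms(1)] ashm_rotate[OF assms(2)]
  note rotated_twice = ashm_rotate[OF rotated(1)] ashm_rotate[OF rotated(2)]
  have "Lmat n A = Lmat n B \<longleftrightarrow> (\<forall>i j. (\<Sum>k=1..n. int k * ?D i j k) = 0)"
    by (simp add: Lmat_def fun_eq_iff right_diff_distrib sum_subtractf)
  also have "\<dots> \<longleftrightarrow> tpair_decomposable n ?D"
  proof (rule tpair_decomposable_iff_moments_zero[symmetric])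
    show "?D i j k = 0" if "\<not> (i \<in> {1..n} \<and> j \<in> {1..n} \<and> k \<in> {1..n})" for i j k
      using assms that unfolding ashm_def by simp
    show "(\<Sum>i=1..n. ?D i j k) = 0" for j k
      using ashm_vertical_sums_eq[OF rotated_twice, where i = j and j = k] by simp
    show "(\<Sum>j=1..n. ?D i j k) = 0" for i k
      using ashm_vertical_sums_eq[OF rotated, where i = k and j = i] by simp
    show "(\<Sum>k=1..n. ?D i j k) = 0" for i j
      using ashm_vertical_sums_eq[OF assms] .
  qed
  finally show ?thesis
    unfolding tpair_decomposable_def opposite_pair_def pairs_hm_def .
qed

end
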